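(* If $s\ge 7$ then $\pi\ge 2(n-q-2m)$.
   Context: $G$ is a set of size $n$ and $G(\circ)$, $G(\ast)$ are distinct groups on $G$ with the same identity element. $\mathrm{diff}(\circ,\ast)=\{(a,b):a\circ b\ne a\ast b\}$, $\mathrm{dist}(\circ,\ast)=|\mathrm{diff}(\circ,\ast)|$, $\mathrm{dist}_a=|\{b:a\circ b\ne a\ast b\}|$; $H=\{a:\mathrm{dist}_a=0\}$, $h=|H|$; $K=\{a:\mathrm{dist}_a<n/3\}$, $k=|K|$; $m=\min\{\mathrm{dist}_a:\mathrm{dist}_a>0\}$. Standing assumption: $m\ge 3$. Let $q=\lceil n/3\rceil$ and the profit $\pi=\mathrm{dist}(\circ,\ast)-((k-h)m+(n-k)q)$. Let $S=\{(a,b)\in\mathrm{diff}(\circ,\ast):a,b\in K,\ a\ne b\}$, $s=|S|$. *)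

theory Defs
  imports Complex_Main "HOL-Algebra.Group"
begin

text \<open>Two groups A (operation \<circ>) and B (operation \<ast>) on the same carrier set G.\<close>

definition diff_set :: "('a,'b) monoid_scheme \<Rightarrow> ('a,'c) monoid_scheme \<Rightarrow> ('a \<times> 'a) set" where
  "diff_set A B = {(a,b). a \<in> carrier A \<and> b \<in> carrier A \<and> a \<otimes>\<^bsub>A\<^esub> b \<noteq> a \<otimes>\<^bsub>B\<^esub> b}"

definition dist_ops :: "('a,'b) monoid_scheme \<Rightarrow> ('a,'c) monoid_scheme \<Rightarrow> nat" where
  "dist_ops A B = card (diff_set A B)"

definition dist_at :: "('a,'b) monoid_scheme \<Rightarrow> ('a,'c) monoid_scheme \<Rightarrow> 'a \<Rightarrow> nat" where
  "dist_at A B a = card {b \<in> carrier A. a \<otimes>\<^bsub>A\<^esub> b \<noteq> a \<otimes>\<^bsub>B\<^esub> b}"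

definition H_set :: "('a,'b) monoid_scheme \<Rightarrow> ('a,'c) monoid_scheme \<Rightarrow> 'a set" where
  "H_set A B = {a \<in> carrier A. dist_at A B a = 0}"

definition K_set :: "('a,'b) monoid_scheme \<Rightarrow> ('a,'c) monoid_scheme \<Rightarrow> 'a set" where
  "K_set A B = {a \<in> carrier A. real (dist_at A B a) < real (card (carrier A)) / 3}"

definition m_val :: "('a,'b) monoid_scheme \<Rightarrow> ('a,'c) monoid_scheme \<Rightarrow> nat" where
  "m_val A B = Min {dist_at A B a | a. a \<in> carrier A \<and> dist_at A B a > 0}"

definition q_val :: "('a,'b) monoid_scheme \<Rightarrow> nat" where
  "q_val A = nat \<lceil>real (card (carrier A)) / 3\<rceil>"

definition profit :: "('a,'b) monoid_scheme \<Rightarrow> ('a,'c) monoid_scheme \<Rightarrow> int" where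
  "profit A B = int (dist_ops A B)
     - ((int (card (K_set A B)) - int (card (H_set A B))) * int (m_val A B)
        + (int (card (carrier A)) - int (card (K_set A B))) * int (q_val A))"

definition S_set :: "('a,'b) monoid_scheme \<Rightarrow> ('a,'c) monoid_scheme \<Rightarrow> ('a \<times> 'a) set" where
  "S_set A B = {(a,b) \<in> diff_set A B. a \<in> K_set A B \<and> b \<in> K_set A B \<and> a \<noteq> b}"

end

theory Submission
  imports Defs
begin

text \<open>Write the profit as the sum over all rows x of the excess of dist_x over a baseline
charge: q outside K, m on K - H and 0 on H; every row has nonnegative excess. For a pair
(a, b) of S, associativity of both operations shows that the rows of a, b and of either
product x \<in> {a \<circ> b, a \<ast> b} together cover G, so x lies outside K and the three rows have
total excess at least n - q - 2m. Among at least seven pairs of S there are either two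
disjoint pairs, giving six distinct rows, or three pairs through one common element,
giving a star of seven distinct rows; in both cases the excess adds up to 2(n - q - 2m).\<close>

lemma card_le_card_out_plus_card_in:
  assumes fin: "finite S" and star: "\<forall>(x, y) \<in> S. x = c \<or> y = c"
  shows "card S \<le> card {y. (c, y) \<in> S} + card {x. (x, c) \<in> S}"
proof -
  have fin_out: "finite {y. (c, y) \<in> S}"
    by (rule finite_subset[OF _ finite_imageI[OF fin, of snd]]) force
  have fin_in: "finite {x. (x, c) \<in> S}"
    by (rule finite_subset[OF _ finite_imageI[OF fin, of fst]]) force
  have "S \<subseteq> Pair c ` {y. (c, y) \<in> S} \<union> (\<lambda>x. (x, c)) ` {x. (x, c) \<in> S}"
    using star by auto
  then have "card S \<le> card (Pair c ` {y. (c, y) \<in> S} \<union> (\<lambda>x. (x, c)) ` {x. (x, c) \<in> S})"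
    by (rule card_mono[rotated]) (use fin_out fin_in in auto)
  also have "\<dots> \<le> card (Pair c ` {y. (c, y) \<in> S}) + card ((\<lambda>x. (x, c)) ` {x. (x, c) \<in> S})"
    by (rule card_Un_le)
  also have "\<dots> \<le> card {y. (c, y) \<in> S} + card {x. (x, c) \<in> S}"
    by (intro add_mono card_image_le fin_out fin_in)
  finally show ?thesis .
qed

lemma intersecting_pairs_star_or_triangle:
  assumes irrefl: "\<forall>(a, b) \<in> S. a \<noteq> b"
    and meet: "\<And>a1 b1 a2 b2. (a1, b1) \<in> S \<Longrightarrow> (a2, b2) \<in> S
      \<Longrightarrow> a1 = a2 \<or> a1 = b2 \<or> b1 = a2 \<or> b1 = b2"
  shows "(\<exists>c. \<forall>(x, y) \<in> S. x = c \<or> y = c)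
    \<or> (\<exists>a b c. S \<subseteq> {(a, b), (b, a), (a, c), (c, a), (b, c), (c, b)})"
proof (cases "S = {}")
  case False
  then obtain a b where ab: "(a, b) \<in> S" by auto
  show ?thesis
  proof (cases "\<exists>c. \<forall>(x, y) \<in> S. x = c \<or> y = c")
    case no_star: False
    then obtain x1 y1 where p1: "(x1, y1) \<in> S" "x1 \<noteq> a" "y1 \<noteq> a" by blast
    from no_star obtain x2 y2 where p2: "(x2, y2) \<in> S" "x2 \<noteq> b" "y2 \<noteq> b" by blast
    define c where "c = (if x1 = b then y1 else x1)"
    define d where "d = (if x2 = a then y2 else x2)"
    have "x1 \<noteq> y1" "x2 \<noteq> y2" "a \<noteq> b" using irrefl p1(1) p2(1) ab by auto
    moreover have "x1 = b \<or> y1 = b" "x2 = a \<or> y2 = a"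
      using meet[OF ab p1(1)] meet[OF ab p2(1)] p1 p2 by auto
    ultimately have p1_in: "x1 \<in> {b, c} \<and> y1 \<in> {b, c}" "c \<noteq> a" "c \<noteq> b"
      and p2_in: "x2 \<in> {a, d} \<and> y2 \<in> {a, d}" "d \<noteq> a" "d \<noteq> b"
      using p1 p2 by (auto simp: c_def d_def)
    then have "c = d" using meet[OF p1(1) p2(1)] \<open>a \<noteq> b\<close> by auto
    have "(x, y) \<in> {(a, b), (b, a), (a, c), (c, a), (b, c), (c, b)}" if xy: "(x, y) \<in> S" for x y
    proof -
      have "x \<noteq> y" using irrefl xy by auto
      moreover have "x = a \<or> x = b \<or> y = a \<or> y = b" using meet[OF ab xy] by auto
      moreover have "x = b \<or> x = c \<or> y = b \<or> y = c" using meet[OF p1(1) xy] p1_in by auto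
      moreover have "x = a \<or> x = c \<or> y = a \<or> y = c" using meet[OF p2(1) xy] p2_in \<open>c = d\<close> by auto
      ultimately show ?thesis using \<open>a \<noteq> b\<close> p1_in(2,3) by auto
    qed
    then have "S \<subseteq> {(a, b), (b, a), (a, c), (c, a), (b, c), (c, b)}" by auto
    then show ?thesis by blast
  qed simp
qed simp

lemma seven_pairs_high_degree_or_disjoint:
  assumes fin: "finite S" and irrefl: "\<forall>(a, b) \<in> S. a \<noteq> b" and seven: "7 \<le> card S"
  shows "(\<exists>a. 3 \<le> card {b. (a, b) \<in> S}) \<or> (\<exists>b. 3 \<le> card {a. (a, b) \<in> S})
    \<or> (\<exists>a1 b1 a2 b2. (a1, b1) \<in> S \<and> (a2, b2) \<in> S
         \<and> a1 \<noteq> a2 \<and> a1 \<noteq> b2 \<and> b1 \<noteq> a2 \<and> b1 \<noteq> b2)"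
proof (rule ccontr)
  assume none: "\<not> ?thesis"
  then have out_deg: "card {b. (a, b) \<in> S} \<le> 2" and in_deg: "card {a. (a, b) \<in> S} \<le> 2"
    for a b by (simp_all add: not_le less_Suc_eq_le numeral_3_eq_3 numeral_2_eq_2)
  from none have meet: "\<And>a1 b1 a2 b2. (a1, b1) \<in> S \<Longrightarrow> (a2, b2) \<in> S
      \<Longrightarrow> a1 = a2 \<or> a1 = b2 \<or> b1 = a2 \<or> b1 = b2"
    by blast
  have "(\<exists>c. \<forall>(x, y) \<in> S. x = c \<or> y = c)
      \<or> (\<exists>a b c. S \<subseteq> {(a, b), (b, a), (a, c), (c, a), (b, c), (c, b)})"
    by (rule intersecting_pairs_star_or_triangle[OF irrefl]) (rule meet)
  then show False
  proof (elim disjE exE)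
    fix c assume "\<forall>(x, y) \<in> S. x = c \<or> y = c"
    from card_le_card_out_plus_card_in[OF fin this] out_deg[of c] in_deg[of c] seven
    show False by linarith
  next
    fix a b c assume "S \<subseteq> {(a, b), (b, a), (a, c), (c, a), (b, c), (c, b)}"
    then have "card S \<le> card {(a, b), (b, a), (a, c), (c, a), (b, c), (c, b)}"
      by (rule card_mono[rotated]) simp
    also have "\<dots> \<le> 6" by (intro card_insert_le_m1) simp_all
    finally show False using seven by linarith
  qed
qed

lemma three_q_val_le: "3 * q_val A \<le> card (carrier A) + 2"
proof -
  have "real (q_val A) = \<lceil>real (card (carrier A)) / 3\<rceil>"
    unfolding q_val_def by simp
  then show ?thesis using ceiling_correct[of "real (card (carrier A)) / 3"] by linarith
qed

lemma K_set_subset_carrier: "K_set A B \<subseteq> carrier A"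
  by (auto simp: K_set_def)

lemma dist_ops_eq_sum_dist_at:
  assumes "finite (carrier A)"
  shows "dist_ops A B = (\<Sum>x\<in>carrier A. dist_at A B x)"
proof -
  have "diff_set A B = (SIGMA a:carrier A. {b \<in> carrier A. a \<otimes>\<^bsub>A\<^esub> b \<noteq> a \<otimes>\<^bsub>B\<^esub> b})"
    by (auto simp: diff_set_def)
  then show ?thesis using assms by (simp add: dist_ops_def dist_at_def)
qed

definition excess :: "('a, 'b) monoid_scheme \<Rightarrow> ('a, 'c) monoid_scheme \<Rightarrow> 'a \<Rightarrow> int" where
  "excess A B x = int (dist_at A B x)
     - (if x \<in> H_set A B then 0 else if x \<in> K_set A B then int (m_val A B) else int (q_val A))"

definition excess_threshold :: "('a, 'b) monoid_scheme \<Rightarrow> ('a, 'c) monoid_scheme \<Rightarrow> int" where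
  "excess_threshold A B = int (card (carrier A)) - int (q_val A) - 2 * int (m_val A B)"

locale common_carrier_groups = A: group A + B: group B
  for A :: "('a, 'b) monoid_scheme" and B :: "('a, 'c) monoid_scheme" +
  assumes carrier_eq: "carrier B = carrier A"
    and finite_carrier: "finite (carrier A)"
begin

lemma card_carrier_le_dist_at_add:
  assumes a: "a \<in> carrier A" and b: "b \<in> carrier A" and ne: "a \<otimes>\<^bsub>A\<^esub> b \<noteq> a \<otimes>\<^bsub>B\<^esub> b"
    and x: "x \<in> {a \<otimes>\<^bsub>A\<^esub> b, a \<otimes>\<^bsub>B\<^esub> b}"
  shows "card (carrier A) \<le> dist_at A B x + dist_at A B a + dist_at A B b"
proof -
  define row where "row y = {c \<in> carrier A. y \<otimes>\<^bsub>A\<^esub> c \<noteq> y \<otimes>\<^bsub>B\<^esub> c}" for y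
  define E where "E = {c \<in> carrier A. b \<otimes>\<^bsub>A\<^esub> c \<in> row a}"
  have card_row: "card (row y) = dist_at A B y" for y unfolding row_def dist_at_def ..
  have fin: "finite (row y)" "finite E" for y
    using finite_carrier by (auto simp: row_def E_def)
  have "card E \<le> card (row a)"
    by (rule card_inj_on_le[where f = "\<lambda>c. b \<otimes>\<^bsub>A\<^esub> c"])
      (use b fin in \<open>auto simp: inj_on_def E_def\<close>)
  have ab_closed: "a \<otimes>\<^bsub>A\<^esub> b \<in> carrier A" "a \<otimes>\<^bsub>B\<^esub> b \<in> carrier A"
    using a b carrier_eq B.m_closed by auto
  txt \<open>Outside row b and outside the b-translate E of row a, both products of a and b
    associate with c to the same value, so cancellation puts c into the row of x.\<close>
  have "carrier A - (row b \<union> E) \<subseteq> row x"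
  proof
    fix c assume "c \<in> carrier A - (row b \<union> E)"
    then have "c \<in> carrier A" and b_agrees: "b \<otimes>\<^bsub>A\<^esub> c = b \<otimes>\<^bsub>B\<^esub> c"
      and a_agrees: "a \<otimes>\<^bsub>A\<^esub> (b \<otimes>\<^bsub>A\<^esub> c) = a \<otimes>\<^bsub>B\<^esub> (b \<otimes>\<^bsub>A\<^esub> c)"
      using b by (auto simp: row_def E_def)
    have "(a \<otimes>\<^bsub>A\<^esub> b) \<otimes>\<^bsub>A\<^esub> c = a \<otimes>\<^bsub>A\<^esub> (b \<otimes>\<^bsub>A\<^esub> c)"
      using a b \<open>c \<in> carrier A\<close> by (simp add: A.m_assoc)
    also have "\<dots> = a \<otimes>\<^bsub>B\<^esub> (b \<otimes>\<^bsub>B\<^esub> c)" using a_agrees b_agrees by simp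
    also have "\<dots> = (a \<otimes>\<^bsub>B\<^esub> b) \<otimes>\<^bsub>B\<^esub> c"
      using a b \<open>c \<in> carrier A\<close> carrier_eq by (simp add: B.m_assoc)
    finally have assoc: "(a \<otimes>\<^bsub>A\<^esub> b) \<otimes>\<^bsub>A\<^esub> c = (a \<otimes>\<^bsub>B\<^esub> b) \<otimes>\<^bsub>B\<^esub> c" .
    have "(a \<otimes>\<^bsub>A\<^esub> b) \<otimes>\<^bsub>B\<^esub> c \<noteq> (a \<otimes>\<^bsub>B\<^esub> b) \<otimes>\<^bsub>B\<^esub> c"
      using B.right_cancel[of c] \<open>c \<in> carrier A\<close> ab_closed carrier_eq ne by simp
    moreover have "(a \<otimes>\<^bsub>B\<^esub> b) \<otimes>\<^bsub>A\<^esub> c \<noteq> (a \<otimes>\<^bsub>A\<^esub> b) \<otimes>\<^bsub>A\<^esub> c"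
      using A.right_cancel[of c] \<open>c \<in> carrier A\<close> ab_closed ne by auto
    ultimately show "c \<in> row x" using x assoc \<open>c \<in> carrier A\<close> by (auto simp: row_def)
  qed
  then have "card (carrier A) - card (row b \<union> E) \<le> card (row x)"
    using diff_card_le_card_Diff[of "row b \<union> E" "carrier A"] card_mono[OF fin(1)] fin(1,2)
    by (meson finite_UnI order_trans)
  then have "card (carrier A) \<le> card (row x) + card (row b \<union> E)" by linarith
  also have "\<dots> \<le> card (row x) + card (row b) + card (row a)"
    using card_Un_le[of "row b" E] \<open>card E \<le> card (row a)\<close> by linarith
  finally show ?thesis unfolding card_row by linarith
qed

lemma H_set_subset_K_set: "H_set A B \<subseteq> K_set A B"
proof -
  have "card (carrier A) > 0" using finite_carrier A.one_closed card_gt_0_iff by blast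
  then show ?thesis by (auto simp: H_set_def K_set_def)
qed

lemma m_val_le_dist_at:
  assumes "x \<in> carrier A" and "x \<notin> H_set A B"
  shows "m_val A B \<le> dist_at A B x"
proof -
  have "finite {dist_at A B a | a. a \<in> carrier A \<and> dist_at A B a > 0}"
    by (rule finite_subset[OF _ finite_imageI[OF finite_carrier, of "dist_at A B"]]) auto
  then show ?thesis using assms unfolding m_val_def H_set_def by (intro Min_le) auto
qed

lemma profit_eq_sum_excess: "profit A B = (\<Sum>x\<in>carrier A. excess A B x)"
proof -
  let ?C = "carrier A" and ?K = "K_set A B" and ?H = "H_set A B"
  define charge where
    "charge x = (if x \<in> ?H then 0 else if x \<in> ?K then int (m_val A B) else int (q_val A))" for x
  have KC: "?K \<subseteq> ?C" by (rule K_set_subset_carrier)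
  have HK: "?H \<subseteq> ?K" by (rule H_set_subset_K_set)
  have fin: "finite ?K" "finite ?H"
    using finite_subset[OF KC finite_carrier] finite_subset[OF HK] by auto
  have "(\<Sum>x\<in>?C. charge x)
      = (\<Sum>x\<in>?C - ?K. charge x) + (\<Sum>x\<in>?K - ?H. charge x) + (\<Sum>x\<in>?H. charge x)"
    using sum.subset_diff[OF KC finite_carrier, of charge] sum.subset_diff[OF HK fin(1), of charge]
    by simp
  also have "\<dots> = (\<Sum>x\<in>?C - ?K. int (q_val A)) + (\<Sum>x\<in>?K - ?H. int (m_val A B)) + 0"
    using HK by (intro arg_cong2[where f = "(+)"] sum.cong sum.neutral) (auto simp: charge_def)
  also have "\<dots> = int (card (?C - ?K)) * int (q_val A) + int (card (?K - ?H)) * int (m_val A B)"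
    by simp
  also have "\<dots> = (int (card ?K) - int (card ?H)) * int (m_val A B)
      + (int (card ?C) - int (card ?K)) * int (q_val A)"
    using card_Diff_subset[OF fin(1) KC] card_Diff_subset[OF fin(2) HK]
      card_mono[OF finite_carrier KC] card_mono[OF fin(1) HK] by (simp add: of_nat_diff)
  finally show ?thesis
    using dist_ops_eq_sum_dist_at[OF finite_carrier, of B]
    by (simp add: profit_def excess_def charge_def sum_subtractf)
qed

lemma excess_nonneg:
  assumes "x \<in> carrier A"
  shows "0 \<le> excess A B x"
proof -
  have "int (q_val A) \<le> int (dist_at A B x)" if "x \<notin> K_set A B"
    using that assms three_q_val_le[of A] by (simp add: K_set_def)
  then show ?thesis using m_val_le_dist_at[OF assms] by (auto simp: excess_def)
qed

lemma sum_excess_le_profit: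
  assumes "W \<subseteq> carrier A"
  shows "(\<Sum>x\<in>W. excess A B x) \<le> profit A B"
  unfolding profit_eq_sum_excess
  using assms by (intro sum_mono2 finite_carrier) (auto intro: excess_nonneg)

lemma S_set_memD:
  assumes "(a, b) \<in> S_set A B"
  shows "a \<in> K_set A B" "b \<in> K_set A B" "a \<noteq> b" "a \<notin> H_set A B"
    and "a \<otimes>\<^bsub>A\<^esub> b \<noteq> a \<otimes>\<^bsub>B\<^esub> b"
proof -
  show ab: "a \<in> K_set A B" "b \<in> K_set A B" "a \<noteq> b" "a \<otimes>\<^bsub>A\<^esub> b \<noteq> a \<otimes>\<^bsub>B\<^esub> b"
    using assms by (auto simp: S_set_def diff_set_def)
  have "b \<in> {c \<in> carrier A. a \<otimes>\<^bsub>A\<^esub> c \<noteq> a \<otimes>\<^bsub>B\<^esub> c}"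
    using ab K_set_subset_carrier[of A B] by auto
  then have "dist_at A B a \<noteq> 0" using finite_carrier by (auto simp: dist_at_def)
  then show "a \<notin> H_set A B" by (simp add: H_set_def)
qed

lemma two_excess_le_threshold:
  assumes "x \<in> K_set A B - H_set A B"
  shows "2 * excess A B x \<le> excess_threshold A B"
  using assms three_q_val_le[of A] by (auto simp: excess_def excess_threshold_def K_set_def)

lemma threshold_le_excess_triple:
  assumes ab: "(a, b) \<in> S_set A B" and x: "x \<in> {a \<otimes>\<^bsub>A\<^esub> b, a \<otimes>\<^bsub>B\<^esub> b}"
  shows "x \<in> carrier A - K_set A B"
    and "excess_threshold A B \<le> excess A B a + excess A B b + excess A B x"
proof -
  note ab_facts = S_set_memD[OF ab]
  then have "a \<in> carrier A" "b \<in> carrier A" using K_set_subset_carrier[of A B] by auto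
  with ab_facts card_carrier_le_dist_at_add[OF _ _ _ x]
  have row_bound: "card (carrier A) \<le> dist_at A B x + dist_at A B a + dist_at A B b" by blast
  have "x \<in> carrier A" using x \<open>a \<in> carrier A\<close> \<open>b \<in> carrier A\<close> carrier_eq B.m_closed by auto
  with row_bound ab_facts(1,2) show x_out: "x \<in> carrier A - K_set A B"
    by (auto simp: K_set_def)
  with ab_facts(1,2) row_bound
  show "excess_threshold A B \<le> excess A B a + excess A B b + excess A B x"
    by (auto simp: excess_def excess_threshold_def split: if_splits)
qed

lemma star_profit_bound:
  assumes c: "c \<in> K_set A B" "2 * excess A B c \<le> excess_threshold A B"
    and F: "F \<subseteq> K_set A B" "c \<notin> F" "3 \<le> card F"
    and f: "inj_on f F" "f ` F \<subseteq> carrier A - K_set A B"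
    and triple: "\<And>y. y \<in> F
      \<Longrightarrow> excess_threshold A B \<le> excess A B c + excess A B y + excess A B (f y)"
  shows "2 * excess_threshold A B \<le> profit A B"
proof -
  let ?e = "excess A B"
  note KC = K_set_subset_carrier[of A B]
  have fin: "finite F" using finite_subset[OF F(1) finite_subset[OF KC finite_carrier]] .
  have "0 \<le> ?e c" using c(1) KC by (intro excess_nonneg) auto
  have "?e c + int (card F) * (excess_threshold A B - ?e c)
      = ?e c + (\<Sum>y\<in>F. excess_threshold A B - ?e c)"
    by simp
  also have "\<dots> \<le> ?e c + (\<Sum>y\<in>F. ?e y + ?e (f y))"
    using triple by (intro add_left_mono sum_mono) (auto simp: algebra_simps)
  also have "\<dots> = ?e c + ((\<Sum>y\<in>F. ?e y) + (\<Sum>x\<in>f ` F. ?e x))"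
    using sum.reindex[OF f(1), of ?e] by (simp add: sum.distrib)
  also have "\<dots> = (\<Sum>x\<in>insert c (F \<union> f ` F). ?e x)"
  proof -
    have "F \<inter> f ` F = {}" "c \<notin> F \<union> f ` F" using F f c(1) by auto
    then show ?thesis using fin by (simp add: sum.union_disjoint)
  qed
  also have "\<dots> \<le> profit A B"
    using F f c(1) KC by (intro sum_excess_le_profit) auto
  finally have "?e c + int (card F) * (excess_threshold A B - ?e c) \<le> profit A B" .
  moreover have "3 * (excess_threshold A B - ?e c) \<le> int (card F) * (excess_threshold A B - ?e c)"
    using F(3) c(2) \<open>0 \<le> ?e c\<close> by (intro mult_right_mono) auto
  ultimately have "?e c + 3 * (excess_threshold A B - ?e c) \<le> profit A B"
    by (meson add_left_mono order_trans)
  then show ?thesis using c(2) by (simp add: algebra_simps)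
qed

lemma two_excess_le_threshold_of_S_set:
  assumes "(a, b) \<in> S_set A B"
  shows "2 * excess A B a \<le> excess_threshold A B" "2 * excess A B b \<le> excess_threshold A B"
proof -
  note ab = S_set_memD[OF assms]
  show a: "2 * excess A B a \<le> excess_threshold A B" using ab by (intro two_excess_le_threshold) auto
  show "2 * excess A B b \<le> excess_threshold A B"
  proof (cases "b \<in> H_set A B")
    case True
    then have "excess A B b = 0" by (simp add: excess_def H_set_def)
    moreover have "0 \<le> excess A B a"
      using ab(1) K_set_subset_carrier[of A B] by (intro excess_nonneg) auto
    ultimately show ?thesis using a by linarith
  qed (use ab in \<open>intro two_excess_le_threshold, auto\<close>)
qed

lemma out_star_profit_bound:
  assumes "3 \<le> card {b. (a, b) \<in> S_set A B}"
  shows "2 * excess_threshold A B \<le> profit A B"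
proof -
  obtain b0 where "(a, b0) \<in> S_set A B" using assms by fastforce
  note a = S_set_memD[OF this] two_excess_le_threshold_of_S_set(1)[OF this]
  have "inj_on (\<lambda>b. a \<otimes>\<^bsub>A\<^esub> b) {b. (a, b) \<in> S_set A B}"
    using a(1) S_set_memD(2) K_set_subset_carrier[of A B] by (force simp: inj_on_def subset_iff)
  then show ?thesis
    using a S_set_memD(2,3) threshold_le_excess_triple assms
    by (intro star_profit_bound[where c = a and f = "\<lambda>b. a \<otimes>\<^bsub>A\<^esub> b"]) auto
qed

lemma in_star_profit_bound:
  assumes "3 \<le> card {a. (a, b) \<in> S_set A B}"
  shows "2 * excess_threshold A B \<le> profit A B"
proof -
  obtain a0 where "(a0, b) \<in> S_set A B" using assms by fastforce
  note b = S_set_memD(2)[OF this] two_excess_le_threshold_of_S_set(2)[OF this]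
  have "inj_on (\<lambda>a. a \<otimes>\<^bsub>A\<^esub> b) {a. (a, b) \<in> S_set A B}"
    using b(1) S_set_memD(1) K_set_subset_carrier[of A B] by (force simp: inj_on_def subset_iff)
  then show ?thesis
    using b S_set_memD(1,3) threshold_le_excess_triple assms
    by (intro star_profit_bound[where c = b and f = "\<lambda>a. a \<otimes>\<^bsub>A\<^esub> b"])
      (auto simp: add.commute add.left_commute)
qed

lemma disjoint_pairs_profit_bound:
  assumes p1: "(a1, b1) \<in> S_set A B" and p2: "(a2, b2) \<in> S_set A B"
    and distinct: "a1 \<noteq> a2" "a1 \<noteq> b2" "b1 \<noteq> a2" "b1 \<noteq> b2"
  shows "2 * excess_threshold A B \<le> profit A B"
proof -
  let ?e = "excess A B"
  define x1 where "x1 = a1 \<otimes>\<^bsub>A\<^esub> b1"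
  then have x1: "x1 \<in> {a1 \<otimes>\<^bsub>A\<^esub> b1, a1 \<otimes>\<^bsub>B\<^esub> b1}" by simp
  obtain x2 where x2: "x2 \<in> {a2 \<otimes>\<^bsub>A\<^esub> b2, a2 \<otimes>\<^bsub>B\<^esub> b2}" "x2 \<noteq> x1"
    using S_set_memD(5)[OF p2] by blast
  note triple1 = threshold_le_excess_triple[OF p1 x1]
    and triple2 = threshold_le_excess_triple[OF p2 x2(1)]
  have in_K: "a1 \<in> K_set A B" "b1 \<in> K_set A B" "a2 \<in> K_set A B" "b2 \<in> K_set A B"
    using S_set_memD[OF p1] S_set_memD[OF p2] by auto
  then have "{a1, b1, a2, b2, x1, x2} \<subseteq> carrier A"
    using triple1(1) triple2(1) K_set_subset_carrier[of A B] by auto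
  then have "(\<Sum>x\<in>{a1, b1, a2, b2, x1, x2}. ?e x) \<le> profit A B"
    by (rule sum_excess_le_profit)
  moreover have "a1 \<notin> {x1, x2}" "b1 \<notin> {x1, x2}" "a2 \<notin> {x1, x2}" "b2 \<notin> {x1, x2}" "x1 \<noteq> x2"
    using in_K triple1(1) triple2(1) x2(2) by auto
  then have "(\<Sum>x\<in>{a1, b1, a2, b2, x1, x2}. ?e x)
      = ?e a1 + ?e b1 + ?e a2 + ?e b2 + ?e x1 + ?e x2"
    using distinct S_set_memD(3)[OF p1] S_set_memD(3)[OF p2] by (simp add: algebra_simps)
  ultimately show ?thesis using triple1(2) triple2(2) by linarith
qed

end

theorem lemma9p6:
  fixes A :: "('a,'b) monoid_scheme" and B :: "('a,'c) monoid_scheme"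
  assumes "group A" and "group B"
    and "carrier B = carrier A"
    and "finite (carrier A)"
    and "\<one>\<^bsub>B\<^esub> = \<one>\<^bsub>A\<^esub>"
    and "\<exists>a\<in>carrier A. \<exists>b\<in>carrier A. a \<otimes>\<^bsub>A\<^esub> b \<noteq> a \<otimes>\<^bsub>B\<^esub> b"
    and "m_val A B \<ge> 3"
    and "card (S_set A B) \<ge> 7"
  shows "profit A B \<ge> 2 * (int (card (carrier A)) - int (q_val A) - 2 * int (m_val A B))"
proof -
  interpret common_carrier_groups A B
    using assms(1-4) by (simp add: common_carrier_groups_def common_carrier_groups_axioms_def)
  have "S_set A B \<subseteq> carrier A \<times> carrier A" by (auto simp: S_set_def diff_set_def)
  then have "finite (S_set A B)" by (rule finite_subset) (simp add: finite_carrier)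
  moreover have "\<forall>(a, b) \<in> S_set A B. a \<noteq> b" using S_set_memD(3) by blast
  ultimately have "2 * excess_threshold A B \<le> profit A B"
    using seven_pairs_high_degree_or_disjoint[of "S_set A B"] assms(8)
    by (auto intro: out_star_profit_bound in_star_profit_bound disjoint_pairs_profit_bound)
  then show ?thesis by (simp add: excess_threshold_def)
qed

end
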